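(* Let $X\in\mathbb{R}^{n\times p}$, $\mathbf y\in\mathbb{R}^n$, $\mathbf y\neq\mathbf 0$, $0<\lambda_1\le\|X^T\mathbf y\|_\infty$, $0<\lambda_2<\lambda_1$, and $\mathbf x\in\mathbb{R}^n$ with $\mathbf x\neq\mathbf 0$. Let $\mathbf a=\frac{\mathbf y}{\lambda_1}-\boldsymbol\theta_1^*$ and $\mathbf b=\frac{\mathbf y}{\lambda_2}-\boldsymbol\theta_1^*$. Consider the optimization problem $$\min_{\mathbf r\in\mathbb{R}^n}\ \langle\mathbf x,\mathbf r\rangle\quad\text{subject to}\quad \langle\mathbf a,\mathbf r+\mathbf b\rangle\le 0,\ \ \|\mathbf r\|_2^2\le\|\mathbf b\|_2^2.$$ Its optimal value equals $-\|\mathbf x\|_2\|\mathbf b\|_2$ if $\frac{\langle\mathbf b,\mathbf a\rangle}{\|\mathbf b\|_2}\le\frac{\langle\mathbf x,\mathbf a\rangle}{\|\mathbf x\|_2}$, and otherwise (in which case $\mathbf a\ne\mathbf 0$) it equals $$-\|\mathbf x^\perp\|_2\sqrt{\|\mathbf b\|_2^2-\frac{\langle\mathbf b,\mathbf a\rangle^2}{\|\mathbf a\|_2^2}}-\frac{\langle\mathbf a,\mathbf b\rangle\langle\mathbf x,\mathbf a\rangle}{\|\mathbf a\|_2^2},$$ where $\mathbf x^\perp=\mathbf x-\mathbf a\frac{\langle\mathbf x,\mathbf a\rangle}{\|\mathbf a\|_2^2}$.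
   Context: $X\in\mathbb{R}^{n\times p}$ is a matrix and $\mathbf y\in\mathbb{R}^n$ a vector. Let $F=\{\boldsymbol\theta\in\mathbb{R}^n:\|X^T\boldsymbol\theta\|_\infty\le 1\}$. For $\lambda>0$, the Lasso dual optimum $\boldsymbol\theta^*(\lambda)$ is the unique minimizer of $\frac12\|\boldsymbol\theta-\mathbf y/\lambda\|_2^2$ over $\boldsymbol\theta\in F$, i.e. the Euclidean projection of $\mathbf y/\lambda$ onto $F$. Write $\boldsymbol\theta_1^*=\boldsymbol\theta^*(\lambda_1)$. *)

theory Defs
  imports "HOL-Analysis.Analysis"
begin

definition dual_feasible :: "real^'p^'n \<Rightarrow> (real^'n) set" where
  "dual_feasible X = {\<theta>. infnorm (transpose X *v \<theta>) \<le> 1}"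

definition lasso_dual :: "real^'p^'n \<Rightarrow> real^'n \<Rightarrow> real \<Rightarrow> real^'n" where
  "lasso_dual X y lam = (THE \<theta>. \<theta> \<in> dual_feasible X \<and>
      (\<forall>\<eta>\<in>dual_feasible X. (1/2) * (norm (\<theta> - (1/lam) *\<^sub>R y))\<^sup>2
                              \<le> (1/2) * (norm (\<eta> - (1/lam) *\<^sub>R y))\<^sup>2))"

end

theory Submission
  imports Defs
begin

text \<open>The stated condition says exactly that the minimiser
  \<open>-\<parallel>b\<parallel> x / \<parallel>x\<parallel>\<close> over the whole ball lies in the halfspace; then Cauchy--Schwarz gives the value.
  Otherwise the halfspace constraint is active. Writing vectors as a coordinate along \<open>a\<close> plus a
  component orthogonal to \<open>a\<close> reduces the problem to a linear function on a disc cut by a line,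
  minimised at the corner where the line meets the circle.\<close>

lemma cross_nonpos_if_cos_less:
  fixes \<xi> p c q N B :: real
  assumes "p \<ge> 0" "q > 0" "N \<ge> 0" "B \<ge> 0"
    and N: "N\<^sup>2 = \<xi>\<^sup>2 + p\<^sup>2" and B: "B\<^sup>2 = c\<^sup>2 + q\<^sup>2"
    and less: "c * N + \<xi> * B < 0"
  shows "\<xi> * q + p * c \<le> 0"
proof -
  \<comment> \<open>With \<open>(c, q) = B (cos \<alpha>, sin \<alpha>)\<close> and \<open>(-\<xi>, p) = N (cos \<beta>, sin \<beta>)\<close> in the upper half plane,
    the hypothesis is \<open>cos \<alpha> < cos \<beta>\<close> and the claim \<open>sin (\<alpha> - \<beta>) \<ge> 0\<close>; the identity is
    \<open>(cos \<beta> - cos \<alpha>) (1 + cos (\<alpha> - \<beta>)) = sin (\<alpha> - \<beta>) (sin \<alpha> + sin \<beta>)\<close>.\<close>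
  have "(\<xi> * B + c * N) * (B * N - c * \<xi> + p * q) = (\<xi> * q + p * c) * (q * N + p * B)"
    using N B by algebra
  moreover have "c * \<xi> - p * q \<le> B * N"
  proof (rule power2_le_imp_le)
    have "(c * \<xi> - p * q)\<^sup>2 \<le> (c\<^sup>2 + q\<^sup>2) * (\<xi>\<^sup>2 + p\<^sup>2)"
      using zero_le_power2[of "c * p + q * \<xi>"] by (simp add: algebra_simps power2_eq_square)
    then show "(c * \<xi> - p * q)\<^sup>2 \<le> (B * N)\<^sup>2"
      by (simp add: power_mult_distrib N B)
  qed (use assms in simp)
  moreover have "N > 0"
    using less N \<open>B \<ge> 0\<close> \<open>N \<ge> 0\<close> by (cases "N = 0") (auto simp: add_nonneg_eq_0_iff)
  then have "q * N + p * B > 0"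
    using assms by (simp add: add_pos_nonneg)
  ultimately show ?thesis
    using less by (smt (verit) mult_le_0_iff zero_less_mult_iff)
qed

lemma halfdisc_linear_lower_bound:
  fixes \<xi> p c q N B t \<sigma> :: real
  assumes "p \<ge> 0" "q \<ge> 0" "\<sigma> \<ge> 0" "N \<ge> 0" "B \<ge> 0"
    and N: "N\<^sup>2 = \<xi>\<^sup>2 + p\<^sup>2" and B: "B\<^sup>2 = c\<^sup>2 + q\<^sup>2"
    and less: "c * N + \<xi> * B < 0"
    and "t \<le> c" and disc: "t\<^sup>2 + \<sigma>\<^sup>2 \<le> B\<^sup>2"
  shows "c * \<xi> - p * q \<le> t * \<xi> - p * \<sigma>"
proof (cases "q = 0")
  case True
  then have "B = \<bar>c\<bar>"
    using B \<open>B \<ge> 0\<close> power2_abs[of c] by (metis add_0_right zero_power2 power2_eq_iff_nonneg abs_ge_zero)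
  have "c < 0"
  proof (rule ccontr)
    assume "\<not> c < 0"
    moreover have "\<bar>\<xi>\<bar> \<le> N"
      using N \<open>N \<ge> 0\<close> abs_le_square_iff[of \<xi> N] by simp
    ultimately have "0 \<le> c * (N + \<xi>)"
      by simp
    with less \<open>B = \<bar>c\<bar>\<close> \<open>\<not> c < 0\<close> show False
      by (simp add: algebra_simps)
  qed
  moreover have "t\<^sup>2 + \<sigma>\<^sup>2 \<le> c\<^sup>2"
    using disc B True by simp
  then have "t\<^sup>2 \<le> c\<^sup>2"
    using zero_le_power2[of \<sigma>] by linarith
  ultimately have "t = c"
    using \<open>t \<le> c\<close> abs_le_square_iff[of t c] by linarith
  then have "\<sigma> = 0"
    using disc B True \<open>\<sigma> \<ge> 0\<close> by simp
  with \<open>t = c\<close> True show ?thesis by simp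
next
  case False
  then have "q > 0" using \<open>q \<ge> 0\<close> by simp
  have cross: "\<xi> * q \<le> - p * c"
    using cross_nonpos_if_cos_less[OF \<open>p \<ge> 0\<close> \<open>q > 0\<close> \<open>N \<ge> 0\<close> \<open>B \<ge> 0\<close> N B less] by simp
  \<comment> \<open>multiplied by \<open>q\<close>, the gap is a nonnegative combination of \<open>cross\<close> and the disc constraint\<close>
  have "c * t + q * \<sigma> \<le> c\<^sup>2 + q\<^sup>2"
    using disc B zero_le_power2[of "c - t"] zero_le_power2[of "q - \<sigma>"]
    by (simp add: power2_diff)
  then have "0 \<le> p * (c\<^sup>2 + q\<^sup>2 - c * t - q * \<sigma>)"
    using \<open>p \<ge> 0\<close> by simp
  also have "\<dots> \<le> (\<xi> * q) * (t - c) + p * (q * q - q * \<sigma>)"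
    using mult_right_mono_neg[OF cross, of "t - c"] \<open>t \<le> c\<close>
    by (simp add: algebra_simps power2_eq_square)
  also have "\<dots> = q * ((t * \<xi> - p * \<sigma>) - (c * \<xi> - p * q))"
    by (simp add: algebra_simps)
  finally show ?thesis
    using \<open>q > 0\<close> by (simp add: zero_le_mult_iff)
qed

definition orth_comp :: "'a::real_inner \<Rightarrow> 'a \<Rightarrow> 'a" where
  "orth_comp a v = v - ((v \<bullet> a) / (norm a)\<^sup>2) *\<^sub>R a"

lemma inner_orth_comp_right [simp]: "a \<bullet> orth_comp a v = 0"
  by (cases "a = 0") (simp_all add: orth_comp_def inner_diff_right inner_commute dot_square_norm)

lemma inner_orth_comp_left [simp]: "orth_comp a v \<bullet> a = 0"
  using inner_orth_comp_right by (metis inner_commute)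

lemma orth_comp_scaleR_add:
  assumes "a \<bullet> w = 0"
  shows "orth_comp a (s *\<^sub>R a + w) = w"
  using assms by (cases "a = 0") (simp_all add: orth_comp_def inner_add_right inner_commute dot_square_norm)

lemma inner_orth_decomp:
  assumes "a \<noteq> 0"
  shows "x \<bullet> r = (x \<bullet> a / norm a) * (r \<bullet> a / norm a) + orth_comp a x \<bullet> orth_comp a r"
proof -
  have "orth_comp a x \<bullet> orth_comp a r = orth_comp a x \<bullet> r"
    by (simp add: orth_comp_def [of a r] inner_diff_right)
  also have "\<dots> = x \<bullet> r - (x \<bullet> a) * (r \<bullet> a) / (norm a)\<^sup>2"
    by (simp add: orth_comp_def inner_diff_left inner_commute [of _ a])
  finally show ?thesis
    using assms by (simp add: power2_eq_square)
qed

lemma norm_sq_orth_decomp: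
  assumes "a \<noteq> 0"
  shows "(norm v)\<^sup>2 = (v \<bullet> a / norm a)\<^sup>2 + (norm (orth_comp a v))\<^sup>2"
  using inner_orth_decomp [OF assms, of v v] by (simp add: dot_square_norm power2_eq_square)

lemma norm_orth_comp_eq_sqrt:
  assumes "a \<noteq> 0"
  shows "norm (orth_comp a v) = sqrt ((norm v)\<^sup>2 - (v \<bullet> a)\<^sup>2 / (norm a)\<^sup>2)"
  using norm_sq_orth_decomp [OF assms, of v] by (simp add: power_divide)

lemma Inf_inner_cut_ball_unconstrained:
  fixes a b x :: "'a::real_inner"
  assumes "x \<noteq> 0" and cond: "b \<bullet> a / norm b \<le> x \<bullet> a / norm x"
  shows "Inf {x \<bullet> r | r. a \<bullet> (r + b) \<le> 0 \<and> (norm r)\<^sup>2 \<le> (norm b)\<^sup>2} = - norm x * norm b"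
proof (rule cInf_eq_minimum)
  define r\<^sub>0 where "r\<^sub>0 = - (norm b / norm x) *\<^sub>R x"
  have "x \<bullet> r\<^sub>0 = - norm x * norm b"
    using \<open>x \<noteq> 0\<close> by (simp add: r\<^sub>0_def dot_square_norm power2_eq_square)
  moreover have "norm r\<^sub>0 = norm b"
    using \<open>x \<noteq> 0\<close> by (simp add: r\<^sub>0_def)
  moreover have "a \<bullet> (r\<^sub>0 + b) \<le> 0"
  proof (cases "b = 0")
    case False
    then have "b \<bullet> a \<le> norm b * (x \<bullet> a / norm x)"
      using cond by (simp add: divide_le_eq mult.commute)
    then show ?thesis
      by (simp add: r\<^sub>0_def inner_add_right inner_commute algebra_simps)
  qed (simp add: r\<^sub>0_def)
  ultimately show "- norm x * norm b \<in> {x \<bullet> r | r. a \<bullet> (r + b) \<le> 0 \<and> (norm r)\<^sup>2 \<le> (norm b)\<^sup>2}"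
    by (intro CollectI exI [of _ r\<^sub>0]) simp
next
  fix z
  assume "z \<in> {x \<bullet> r | r. a \<bullet> (r + b) \<le> 0 \<and> (norm r)\<^sup>2 \<le> (norm b)\<^sup>2}"
  then obtain r where z: "z = x \<bullet> r" and ball: "(norm r)\<^sup>2 \<le> (norm b)\<^sup>2"
    by blast
  from ball have "norm r \<le> norm b"
    by (rule power2_le_imp_le) simp
  then have "norm x * norm r \<le> norm x * norm b"
    by (simp add: mult_left_mono)
  with Cauchy_Schwarz_ineq2 [of x r] show "- norm x * norm b \<le> z"
    unfolding z by linarith
qed

lemma Inf_inner_cut_ball_active:
  fixes a b x :: "'a::real_inner"
  assumes "x \<noteq> 0" and cond: "x \<bullet> a / norm x < b \<bullet> a / norm b"
  shows "Inf {x \<bullet> r | r. a \<bullet> (r + b) \<le> 0 \<and> (norm r)\<^sup>2 \<le> (norm b)\<^sup>2}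
       = - norm (orth_comp a x) * norm (orth_comp a b) - (a \<bullet> b) * (x \<bullet> a) / (norm a)\<^sup>2"
proof (cases "b = 0")
  case True
  then have "{x \<bullet> r | r. a \<bullet> (r + b) \<le> 0 \<and> (norm r)\<^sup>2 \<le> (norm b)\<^sup>2} = {0}"
    by (auto intro: exI [of _ 0])
  with True show ?thesis
    by (simp add: orth_comp_def)
next
  case False
  have "a \<noteq> 0"
    using cond by auto
  then have "norm a > 0"
    by simp
  define \<xi> where "\<xi> = x \<bullet> a / norm a"
  define c where "c = - (b \<bullet> a) / norm a"
  define p where "p = norm (orth_comp a x)"
  define q where "q = norm (orth_comp a b)"
  have Nx: "(norm x)\<^sup>2 = \<xi>\<^sup>2 + p\<^sup>2"
    unfolding \<xi>_def p_def by (rule norm_sq_orth_decomp [OF \<open>a \<noteq> 0\<close>])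
  have Nb: "(norm b)\<^sup>2 = c\<^sup>2 + q\<^sup>2"
    unfolding c_def q_def using norm_sq_orth_decomp [OF \<open>a \<noteq> 0\<close>, of b]
    by (simp add: power_divide)
  have "(x \<bullet> a) * norm b < (b \<bullet> a) * norm x"
    using cond \<open>x \<noteq> 0\<close> False by (simp add: field_simps)
  then have less: "c * norm x + \<xi> * norm b < 0"
    unfolding c_def \<xi>_def using \<open>norm a > 0\<close> by (simp add: field_simps)
  have "Inf {x \<bullet> r | r. a \<bullet> (r + b) \<le> 0 \<and> (norm r)\<^sup>2 \<le> (norm b)\<^sup>2} = c * \<xi> - p * q"
  proof (rule cInf_eq_minimum)
    \<comment> \<open>if \<open>p = 0\<close> then \<open>q / p = 0\<close> and the witness lies on the axis through \<open>a\<close>\<close>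
    define r\<^sub>0 where "r\<^sub>0 = (c / norm a) *\<^sub>R a + (- (q / p)) *\<^sub>R orth_comp a x"
    have orth_r\<^sub>0: "orth_comp a r\<^sub>0 = (- (q / p)) *\<^sub>R orth_comp a x"
      unfolding r\<^sub>0_def by (rule orth_comp_scaleR_add) simp
    have a_r\<^sub>0: "r\<^sub>0 \<bullet> a = c * norm a"
      unfolding r\<^sub>0_def using \<open>norm a > 0\<close>
      by (simp add: inner_add_left inner_diff_left dot_square_norm power2_eq_square)
    have "x \<bullet> r\<^sub>0 = c * \<xi> - p * q"
      using inner_orth_decomp [OF \<open>a \<noteq> 0\<close>, of x r\<^sub>0] \<open>norm a > 0\<close>
      unfolding orth_r\<^sub>0 a_r\<^sub>0 \<xi>_def p_def by (simp add: dot_square_norm power2_eq_square)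
    moreover have "a \<bullet> (r\<^sub>0 + b) \<le> 0"
      using a_r\<^sub>0 \<open>norm a > 0\<close> unfolding c_def by (simp add: inner_add_right inner_commute)
    moreover have "(norm r\<^sub>0)\<^sup>2 \<le> (norm b)\<^sup>2"
      using norm_sq_orth_decomp [OF \<open>a \<noteq> 0\<close>, of r\<^sub>0] \<open>norm a > 0\<close>
      unfolding orth_r\<^sub>0 a_r\<^sub>0 Nb p_def
      by (cases "p = 0") (simp_all add: power_mult_distrib power_divide)
    ultimately show "c * \<xi> - p * q \<in> {x \<bullet> r | r. a \<bullet> (r + b) \<le> 0 \<and> (norm r)\<^sup>2 \<le> (norm b)\<^sup>2}"
      by (intro CollectI exI [of _ r\<^sub>0]) simp
  next
    fix z
    assume "z \<in> {x \<bullet> r | r. a \<bullet> (r + b) \<le> 0 \<and> (norm r)\<^sup>2 \<le> (norm b)\<^sup>2}"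
    then obtain r where z: "z = x \<bullet> r" and halfspace: "a \<bullet> (r + b) \<le> 0"
      and ball: "(norm r)\<^sup>2 \<le> (norm b)\<^sup>2"
      by blast
    define t where "t = r \<bullet> a / norm a"
    define \<sigma> where "\<sigma> = norm (orth_comp a r)"
    have "t \<le> c"
      using halfspace \<open>norm a > 0\<close> unfolding t_def c_def
      by (simp add: field_simps inner_add_right inner_commute)
    moreover have "t\<^sup>2 + \<sigma>\<^sup>2 \<le> (norm b)\<^sup>2"
      using ball norm_sq_orth_decomp [OF \<open>a \<noteq> 0\<close>, of r] unfolding t_def \<sigma>_def by simp
    ultimately have "c * \<xi> - p * q \<le> t * \<xi> - p * \<sigma>"
      using halfdisc_linear_lower_bound [OF _ _ _ _ _ Nx Nb less] unfolding p_def q_def \<sigma>_def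
      by simp
    also have "\<dots> \<le> x \<bullet> r"
      using inner_orth_decomp [OF \<open>a \<noteq> 0\<close>, of x r] norm_cauchy_schwarz [of "- orth_comp a x" "orth_comp a r"]
      unfolding t_def \<xi>_def p_def \<sigma>_def by (simp add: mult.commute)
    finally show "c * \<xi> - p * q \<le> z"
      using z by simp
  qed
  also have "\<dots> = - p * q - (a \<bullet> b) * (x \<bullet> a) / (norm a)\<^sup>2"
    unfolding c_def \<xi>_def using \<open>norm a > 0\<close>
    by (simp add: inner_commute power2_eq_square)
  finally show ?thesis
    unfolding p_def q_def by simp
qed

theorem theorem2:
  fixes X :: "real^'p^'n" and y x :: "real^'n" and lam1 lam2 :: real
  assumes "y \<noteq> 0"
    and "0 < lam1" and "lam1 \<le> infnorm (transpose X *v y)"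
    and "0 < lam2" and "lam2 < lam1"
    and "x \<noteq> 0"
  defines "a \<equiv> (1/lam1) *\<^sub>R y - lasso_dual X y lam1"
    and "b \<equiv> (1/lam2) *\<^sub>R y - lasso_dual X y lam1"
  defines "xperp \<equiv> x - ((x \<bullet> a) / (norm a)\<^sup>2) *\<^sub>R a"
  defines "opt \<equiv> Inf {x \<bullet> r | r. a \<bullet> (r + b) \<le> 0 \<and> (norm r)\<^sup>2 \<le> (norm b)\<^sup>2}"
  shows "(b \<bullet> a / norm b \<le> x \<bullet> a / norm x \<longrightarrow> opt = - norm x * norm b)
       \<and> (\<not> (b \<bullet> a / norm b \<le> x \<bullet> a / norm x) \<longrightarrow>
            a \<noteq> 0 \<and>
            opt = - norm xperp * sqrt ((norm b)\<^sup>2 - (b \<bullet> a)\<^sup>2 / (norm a)\<^sup>2)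
                  - (a \<bullet> b) * (x \<bullet> a) / (norm a)\<^sup>2)"
proof (intro conjI impI)
  assume "b \<bullet> a / norm b \<le> x \<bullet> a / norm x"
  then show "opt = - norm x * norm b"
    unfolding opt_def by (rule Inf_inner_cut_ball_unconstrained [OF \<open>x \<noteq> 0\<close>])
next
  assume "\<not> (b \<bullet> a / norm b \<le> x \<bullet> a / norm x)"
  then have cond: "x \<bullet> a / norm x < b \<bullet> a / norm b"
    by simp
  then show "a \<noteq> 0"
    by auto
  have "xperp = orth_comp a x"
    unfolding xperp_def orth_comp_def ..
  then show "opt = - norm xperp * sqrt ((norm b)\<^sup>2 - (b \<bullet> a)\<^sup>2 / (norm a)\<^sup>2)
                  - (a \<bullet> b) * (x \<bullet> a) / (norm a)\<^sup>2"
    unfolding opt_def Inf_inner_cut_ball_active [OF \<open>x \<noteq> 0\<close> cond]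
    using norm_orth_comp_eq_sqrt [OF \<open>a \<noteq> 0\<close>, of b] by simp
qed

end
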